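(* Let $\boldsymbol{u}^\star\in\mathbb{R}^n\setminus\{\boldsymbol{0}\}$ and $f(\boldsymbol{u})=\frac12\|\boldsymbol{u}\boldsymbol{u}^{\mathrm T}-\boldsymbol{u}^\star{\boldsymbol{u}^\star}^{\mathrm T}\|_1$ on $\mathbb{R}^n$. Then for any spurious stationary point $\boldsymbol{u}$ of $f$, and for $\boldsymbol{w}=\boldsymbol{u}^\star-\boldsymbol{u}$ as well as for $\boldsymbol{w}=-\boldsymbol{u}^\star-\boldsymbol{u}$, $$d^2f(\boldsymbol{u};\boldsymbol{0})(\boldsymbol{w})=-\|\boldsymbol{u}^\star\|_1^2<0.$$
   Context: $\|\cdot\|_1$ is the entrywise $\ell_1$-norm. For $g:\mathbb{R}^n\to\mathbb{R}$ and $\boldsymbol{x},\boldsymbol{v},\boldsymbol{w}\in\mathbb{R}^n$, the second subderivative is $d^2g(\boldsymbol{x};\boldsymbol{v})(\boldsymbol{w})=\liminf_{t\searrow0,\ \boldsymbol{w}'\to\boldsymbol{w}}\frac{g(\boldsymbol{x}+t\boldsymbol{w}')-g(\boldsymbol{x})-t\,\boldsymbol{v}^{\mathrm T}\boldsymbol{w}'}{t^2/2}$. A point $\boldsymbol{u}$ is stationary if $\boldsymbol{0}\in\partial f(\boldsymbol{u})$, where $\partial f(\boldsymbol{u})=\{\boldsymbol{Z}\boldsymbol{u}:\boldsymbol{Z}\text{ symmetric}, \boldsymbol{Z}\in\operatorname{Sign}(\boldsymbol{u}\boldsymbol{u}^{\mathrm T}-\boldsymbol{u}^\star{\boldsymbol{u}^\star}^{\mathrm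 T})\}$ (entrywise set-valued sign, $\operatorname{Sign}(0)=[-1,1]$) is the (Fréchet = limiting = Clarke) subdifferential; it is spurious if additionally $\boldsymbol{u}\notin\{\boldsymbol{u}^\star,-\boldsymbol{u}^\star\}$. *)

theory Defs
  imports "HOL-Analysis.Analysis" "HOL-Library.Extended_Real"
begin

definition vl1 :: "real^'n \<Rightarrow> real" where
  "vl1 x = (\<Sum>i\<in>UNIV. \<bar>x $ i\<bar>)"

definition ml1 :: "real^'n^'n \<Rightarrow> real" where
  "ml1 A = (\<Sum>i\<in>UNIV. \<Sum>j\<in>UNIV. \<bar>A $ i $ j\<bar>)"

definition outer :: "real^'n \<Rightarrow> real^'n \<Rightarrow> real^'n^'n" where
  "outer u v = (\<chi> i j. u $ i * v $ j)"

definition fobj :: "real^'n \<Rightarrow> real^'n \<Rightarrow> real" where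
  "fobj ustar u = ml1 (outer u u - outer ustar ustar) / 2"

definition Sign :: "real \<Rightarrow> real set" where
  "Sign a = (if a = 0 then {-1..1} else {sgn a})"

definition subdiff :: "real^'n \<Rightarrow> real^'n \<Rightarrow> (real^'n) set" where
  "subdiff ustar u = {Z *v u | Z. transpose Z = Z \<and>
      (\<forall>i j. Z $ i $ j \<in> Sign ((outer u u - outer ustar ustar) $ i $ j))}"

definition stationary :: "real^'n \<Rightarrow> real^'n \<Rightarrow> bool" where
  "stationary ustar u \<longleftrightarrow> 0 \<in> subdiff ustar u"

definition spurious_stationary :: "real^'n \<Rightarrow> real^'n \<Rightarrow> bool" where
  "spurious_stationary ustar u \<longleftrightarrow> stationary ustar u \<and> u \<noteq> ustar \<and> u \<noteq> - ustar"

definition second_subderiv ::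
  "(real^'n \<Rightarrow> real) \<Rightarrow> real^'n \<Rightarrow> real^'n \<Rightarrow> real^'n \<Rightarrow> ereal" where
  "second_subderiv g x v w =
     Liminf (at_right 0 \<times>\<^sub>F nhds w)
       (\<lambda>(t, w'). ereal ((g (x + t *\<^sub>R w') - g x - t * (v \<bullet> w')) / (t^2 / 2)))"

end

theory Submission
  imports Defs
begin

text \<open>
  Write \<open>\<sigma> = sgn u\<^sup>\<star>\<close> and \<open>V = \<parallel>u\<^sup>\<star>\<parallel>\<^sub>1\<close>. Termwise
  \<open>\<bar>v\<^sub>i v\<^sub>j - u\<^sup>\<star>\<^sub>i u\<^sup>\<star>\<^sub>j\<bar> \<ge> \<bar>u\<^sup>\<star>\<^sub>i\<bar> \<bar>u\<^sup>\<star>\<^sub>j\<bar> - \<sigma>\<^sub>i v\<^sub>i \<sigma>\<^sub>j v\<^sub>j\<close>, so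
  \<open>2 f v \<ge> V\<^sup>2 - \<langle>\<sigma>, v\<rangle>\<^sup>2\<close>, with equality on the box \<open>\<bar>v\<^sub>i\<bar> \<le> \<bar>u\<^sup>\<star>\<^sub>i\<bar>\<close>.

  A spurious stationary point \<open>u\<close> satisfies \<open>\<langle>\<sigma>, u\<rangle> = 0\<close> and lies in the box. For the first
  claim pass to the ratios \<open>\<rho> = u / u\<^sup>\<star>\<close> on the support of \<open>u\<^sup>\<star>\<close>: monotonicity of \<open>Sign\<close>
  forces the rows of the certificate \<open>Z\<close> belonging to the smallest and the largest ratio to
  agree there, and from this one row has constant sign \<open>\<pm>1\<close>, which turns \<open>Z u = 0\<close> into
  \<open>\<langle>\<sigma>, u\<rangle> = 0\<close> (unless \<open>u = \<pm>u\<^sup>\<star>\<close>). Then \<open>2 f u = -u\<^sup>\<star>\<^sup>T Z u\<^sup>\<star> \<le> V\<^sup>2\<close>, so the lower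
  bound is attained at \<open>u\<close>, which forces \<open>u\<close> into the box.

  Hence \<open>f u = V\<^sup>2 / 2\<close>, the second-order difference quotient at \<open>(t, w')\<close> is at least
  \<open>-\<langle>\<sigma>, w'\<rangle>\<^sup>2 \<longrightarrow> -\<langle>\<sigma>, w\<rangle>\<^sup>2 = -V\<^sup>2\<close>, and it equals \<open>-V\<^sup>2\<close> along the segment from \<open>u\<close>
  to \<open>\<pm>u\<^sup>\<star>\<close>, which stays in the box.
\<close>

lemma Sign_abs_le: "z \<in> Sign a \<Longrightarrow> \<bar>z\<bar> \<le> 1"
  by (auto simp: Sign_def abs_sgn_eq split: if_splits)

lemma Sign_mult_self: "z \<in> Sign a \<Longrightarrow> z * a = \<bar>a\<bar>"
  by (auto simp: Sign_def abs_if sgn_if split: if_splits)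

lemma Sign_pos [simp]: "0 < a \<Longrightarrow> Sign a = {1}"
  and Sign_neg [simp]: "a < 0 \<Longrightarrow> Sign a = {-1}"
  by (auto simp: Sign_def)

lemma Sign_pos_eq: "0 < a \<Longrightarrow> z \<in> Sign a \<Longrightarrow> z = 1"
  and Sign_neg_eq: "a < 0 \<Longrightarrow> z \<in> Sign a \<Longrightarrow> z = -1"
  by simp_all

lemma Sign_imp_nonneg: "z \<in> Sign a \<Longrightarrow> z \<noteq> -1 \<Longrightarrow> 0 \<le> a"
  by (cases a "0::real" rule: linorder_cases) auto

lemma Sign_imp_nonpos: "z \<in> Sign a \<Longrightarrow> z \<noteq> 1 \<Longrightarrow> a \<le> 0"
  by (cases a "0::real" rule: linorder_cases) auto

lemma Sign_imp_zero: "z \<in> Sign a \<Longrightarrow> \<bar>z\<bar> < 1 \<Longrightarrow> a = 0"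
  by (cases a "0::real" rule: linorder_cases) auto

lemma Sign_mult_cancel: "c \<noteq> 0 \<Longrightarrow> z \<in> Sign (c * a) \<Longrightarrow> sgn c * z \<in> Sign a"
  by (cases "0 < c") (auto simp: Sign_def sgn_mult sgn_if zero_less_mult_iff mult_less_0_iff split: if_splits)

lemma Sign_ratio:
  fixes a b c d z :: real
  assumes "a \<noteq> 0" "b \<noteq> 0" "z \<in> Sign (c * d - a * b)"
  shows "sgn a * sgn b * z \<in> Sign (c / a * (d / b) - 1)"
proof -
  have "c * d - a * b = (a * b) * (c / a * (d / b) - 1)"
    using assms(1,2) by (simp add: field_simps)
  then show ?thesis
    using Sign_mult_cancel[of "a * b"] assms by (simp add: sgn_mult)
qed

lemma Sign_monotone:
  assumes "z \<in> Sign a" "z' \<in> Sign b"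
  shows "0 \<le> (a - b) * (z - z')"
proof -
  have "\<bar>z * b\<bar> \<le> \<bar>b\<bar>" "\<bar>z' * a\<bar> \<le> \<bar>a\<bar>"
    unfolding abs_mult using Sign_abs_le[OF assms(1)] Sign_abs_le[OF assms(2)]
    by (simp_all add: mult_left_le_one_le)
  then have "z * b \<le> \<bar>b\<bar>" "z' * a \<le> \<bar>a\<bar>"
    by linarith+
  then show ?thesis
    using Sign_mult_self[OF assms(1)] Sign_mult_self[OF assms(2)] by (simp add: algebra_simps)
qed

lemma extreme_product_gt_one:
  fixes p q :: real
  assumes "p < q" "1 \<le> p * p" "1 \<le> q * q" "1 \<le> p * q"
  shows "(\<forall>r\<in>{p..q}. 1 < q * r) \<or> (\<forall>r\<in>{p..q}. 1 < p * r)"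
proof (cases "0 < p")
  case True
  have "1 < q * r" if "r \<in> {p..q}" for r
  proof -
    have "q * p \<le> q * r"
      using that True assms(1) by (intro mult_left_mono) auto
    moreover have "p * p < q * p"
      using True assms(1) by simp
    ultimately show ?thesis
      using assms(2) by linarith
  qed
  then show ?thesis by blast
next
  case False
  have "q < 0"
  proof (rule ccontr)
    assume "\<not> q < 0"
    then have "p * q \<le> 0"
      using False by (simp add: mult_nonpos_nonneg)
    then show False
      using assms(4) by linarith
  qed
  have "1 < p * r" if "r \<in> {p..q}" for r
  proof -
    have "p * q \<le> p * r"
      using that False by (intro mult_left_mono_neg) auto
    moreover have "q * q < p * q"
      using \<open>q < 0\<close> assms(1) by simp
    ultimately show ?thesis
      using assms(3) by linarith
  qed
  then show ?thesis by blast
qed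

lemma extreme_product_lt_one:
  fixes p q r :: real
  assumes "p < q" "\<bar>p\<bar> \<le> 1" "\<bar>q\<bar> \<le> 1" "r \<in> {p..q}"
  shows "q * r < 1 \<or> p * r < 1"
proof (rule ccontr)
  assume "\<not> (q * r < 1 \<or> p * r < 1)"
  moreover have "\<bar>q * r\<bar> \<le> 1" "\<bar>p * r\<bar> \<le> 1"
    unfolding abs_mult using assms by (auto intro!: mult_le_one)
  ultimately have "q * r = 1" "p * r = 1"
    by linarith+
  then have "(q - p) * r = 0" "r \<noteq> 0"
    by (auto simp: algebra_simps)
  then show False
    using assms(1) by simp
qed

lemma Sign_row_constant_between_extremes:
  fixes \<rho> m :: "'a \<Rightarrow> real"
  assumes k: "k \<in> A" and K: "K \<in> A" and less: "\<rho> k < \<rho> K"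
    and between: "\<And>l. l \<in> A \<Longrightarrow> \<rho> l \<in> {\<rho> k..\<rho> K}"
    and sign_k: "\<And>l. l \<in> A \<Longrightarrow> m l \<in> Sign (\<rho> k * \<rho> l - 1)"
    and sign_K: "\<And>l. l \<in> A \<Longrightarrow> m l \<in> Sign (\<rho> K * \<rho> l - 1)"
    and sym: "m k = m K"
  shows "\<exists>\<sigma>\<in>{1, -1}. \<forall>l\<in>A. m l = \<sigma>"
proof -
  have KK: "m K \<in> Sign (\<rho> K * \<rho> K - 1)" and kk: "m K \<in> Sign (\<rho> k * \<rho> k - 1)"
    and kK: "m K \<in> Sign (\<rho> k * \<rho> K - 1)"
    using sign_K[OF K] sign_k[OF k] sign_k[OF K] sym by simp_all
  consider "m K = 1" | "m K = -1" | "\<bar>m K\<bar> < 1"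
    using Sign_abs_le[OF KK] by linarith
  then show ?thesis
  proof cases
    case 1
    then have "1 \<le> \<rho> k * \<rho> k" "1 \<le> \<rho> K * \<rho> K" "1 \<le> \<rho> k * \<rho> K"
      using Sign_imp_nonneg[OF kk] Sign_imp_nonneg[OF KK] Sign_imp_nonneg[OF kK] by simp_all
    from extreme_product_gt_one[OF less this] show ?thesis
    proof
      assume "\<forall>r\<in>{\<rho> k..\<rho> K}. 1 < \<rho> K * r"
      then have "m l = 1" if "l \<in> A" for l
        using Sign_pos_eq[OF _ sign_K[OF that]] between[OF that] by simp
      then show ?thesis by blast
    next
      assume "\<forall>r\<in>{\<rho> k..\<rho> K}. 1 < \<rho> k * r"
      then have "m l = 1" if "l \<in> A" for l
        using Sign_pos_eq[OF _ sign_k[OF that]] between[OF that] by simp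
      then show ?thesis by blast
    qed
  next
    case 2
    then have "\<rho> K * \<rho> K \<le> 1" "\<rho> k * \<rho> k \<le> 1"
      using Sign_imp_nonpos[OF KK] Sign_imp_nonpos[OF kk] by simp_all
    then have "\<bar>\<rho> k\<bar> \<le> 1" "\<bar>\<rho> K\<bar> \<le> 1"
      by (simp_all add: abs_square_le_1[symmetric] power2_eq_square)
    then have "m l = -1" if "l \<in> A" for l
      using extreme_product_lt_one[OF less _ _ between[OF that]]
        Sign_neg_eq[OF _ sign_K[OF that]] Sign_neg_eq[OF _ sign_k[OF that]]
      by auto
    then show ?thesis by blast
  next
    case 3
    then have "\<rho> K * \<rho> K = 1" "\<rho> k * \<rho> K = 1"
      using Sign_imp_zero[OF KK] Sign_imp_zero[OF kK] by simp_all
    then have "(\<rho> K - \<rho> k) * \<rho> K = 0" "\<rho> K \<noteq> 0"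
      by (auto simp: algebra_simps)
    then show ?thesis
      using less by simp
  qed
qed

text \<open>Stationarity rewritten in the variables \<open>\<rho> = u / u\<^sup>\<star>\<close>, \<open>x = \<bar>u\<^sup>\<star>\<bar>\<close> and
  \<open>M = D Z D\<close> with \<open>D = diag (sgn u\<^sup>\<star>)\<close>, restricted to the support \<open>A\<close> of \<open>u\<^sup>\<star>\<close>.\<close>

context
  fixes A :: "'a set" and \<rho> x :: "'a \<Rightarrow> real" and M :: "'a \<Rightarrow> 'a \<Rightarrow> real"
  assumes fin: "finite A"
    and pos: "\<And>l. l \<in> A \<Longrightarrow> 0 < x l"
    and sym: "\<And>k l. k \<in> A \<Longrightarrow> l \<in> A \<Longrightarrow> M k l = M l k"
    and sign: "\<And>k l. k \<in> A \<Longrightarrow> l \<in> A \<Longrightarrow> M k l \<in> Sign (\<rho> k * \<rho> l - 1)"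
    and rows: "\<And>k. k \<in> A \<Longrightarrow> (\<Sum>l\<in>A. M k l * (\<rho> l * x l)) = 0"
begin

lemma Sign_rows_agree:
  assumes a: "a \<in> A" and b: "b \<in> A" and "\<rho> a \<noteq> \<rho> b"
    and l: "l \<in> A" and "\<rho> l \<noteq> 0"
  shows "M a l = M b l"
proof -
  define T where "T j = (\<rho> a - \<rho> b) * (M a j - M b j) * (\<rho> j * x j)" for j
  have T_nonneg: "0 \<le> T j" if "j \<in> A" for j
  proof -
    have "0 \<le> ((\<rho> a * \<rho> j - 1) - (\<rho> b * \<rho> j - 1)) * (M a j - M b j)"
      using Sign_monotone[OF sign[OF a that] sign[OF b that]] .
    moreover have "T j = ((\<rho> a * \<rho> j - 1) - (\<rho> b * \<rho> j - 1)) * (M a j - M b j) * x j"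
      by (simp add: T_def algebra_simps)
    ultimately show ?thesis
      using pos[OF that] by simp
  qed
  have "(\<Sum>j\<in>A. T j)
      = (\<Sum>j\<in>A. (\<rho> a - \<rho> b) * (M a j * (\<rho> j * x j)) - (\<rho> a - \<rho> b) * (M b j * (\<rho> j * x j)))"
    by (intro sum.cong) (simp_all add: T_def algebra_simps)
  also have "\<dots> = (\<rho> a - \<rho> b) * (\<Sum>j\<in>A. M a j * (\<rho> j * x j)) - (\<rho> a - \<rho> b) * (\<Sum>j\<in>A. M b j * (\<rho> j * x j))"
    by (simp add: sum_subtractf sum_distrib_left)
  also have "\<dots> = 0"
    using rows[OF a] rows[OF b] by simp
  finally have "T l = 0"
    using sum_nonneg_eq_0_iff[OF fin, of T] T_nonneg l by blast
  then show ?thesis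
    using \<open>\<rho> a \<noteq> \<rho> b\<close> \<open>\<rho> l \<noteq> 0\<close> pos[OF l] by (simp add: T_def)
qed

lemma Sign_constant_row_if_ratios_differ:
  assumes ab: "a \<in> A" "b \<in> A" "\<rho> a \<noteq> \<rho> b" and nonzero: "\<And>l. l \<in> A \<Longrightarrow> \<rho> l \<noteq> 0"
  shows "\<exists>r\<in>A. \<exists>\<sigma>\<in>{1, -1}. \<forall>l\<in>A. M r l = \<sigma>"
proof -
  have "Min (\<rho> ` A) \<in> \<rho> ` A" "Max (\<rho> ` A) \<in> \<rho> ` A"
    by (intro Min_in Max_in; use fin ab(1) in blast)+
  then obtain k K where k: "k \<in> A" "\<rho> k = Min (\<rho> ` A)" and K: "K \<in> A" "\<rho> K = Max (\<rho> ` A)"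
    by (auto simp: image_iff)
  have between: "\<rho> l \<in> {\<rho> k..\<rho> K}" if "l \<in> A" for l
    using that fin k K by simp
  have less: "\<rho> k < \<rho> K"
    using between[OF ab(1)] between[OF ab(2)] ab(3) unfolding atLeastAtMost_iff by linarith
  have agree: "M k l = M K l" if "l \<in> A" for l
    using Sign_rows_agree[OF k(1) K(1) _ that nonzero[OF that]] less by simp
  have "\<exists>\<sigma>\<in>{1, -1}. \<forall>l\<in>A. M K l = \<sigma>"
  proof (rule Sign_row_constant_between_extremes[OF k(1) K(1) less between])
    show "M K l \<in> Sign (\<rho> k * \<rho> l - 1)" if "l \<in> A" for l
      using sign[OF k(1) that] agree[OF that] by simp
    show "M K l \<in> Sign (\<rho> K * \<rho> l - 1)" if "l \<in> A" for l
      using sign[OF K(1) that] .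
    show "M K k = M K K"
      using sym[OF K(1) k(1)] agree[OF K(1)] by simp
  qed
  then show ?thesis
    using K(1) by blast
qed

lemma Sign_ratio_trichotomy:
  "(\<Sum>l\<in>A. \<rho> l * x l) = 0 \<or> (\<forall>l\<in>A. \<rho> l = 1) \<or> (\<forall>l\<in>A. \<rho> l = -1)"
proof -
  have sum_zero_if_constant_row: "(\<Sum>l\<in>A. \<rho> l * x l) = 0"
    if constant_row: "\<exists>r\<in>A. \<exists>\<sigma>\<in>{1, -1}. \<forall>l\<in>A. M r l = \<sigma>"
  proof -
    obtain r \<sigma> where r: "r \<in> A" and \<sigma>: "\<sigma> \<in> {1, -1}" and row: "\<forall>l\<in>A. M r l = \<sigma>"
      using constant_row by blast
    have "\<sigma> * (\<Sum>l\<in>A. \<rho> l * x l) = (\<Sum>l\<in>A. M r l * (\<rho> l * x l))"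
      using row by (simp add: sum_distrib_left)
    then show ?thesis
      using rows[OF r] \<sigma> by auto
  qed
  consider (zero_ratio) r where "r \<in> A" "\<rho> r = 0"
    | (distinct_ratios) a b where "a \<in> A" "b \<in> A" "\<rho> a \<noteq> \<rho> b" "\<forall>l\<in>A. \<rho> l \<noteq> 0"
    | (empty) "A = {}"
    | (equal_ratios) r where "r \<in> A" "\<forall>l\<in>A. \<rho> l = \<rho> r" "\<rho> r \<noteq> 0"
    by blast
  then show ?thesis
  proof cases
    case (zero_ratio r)
    have "M r l = -1" if "l \<in> A" for l
      using sign[OF zero_ratio(1) that] zero_ratio(2) by simp
    then show ?thesis
      using sum_zero_if_constant_row zero_ratio(1) by blast
  next
    case (distinct_ratios a b)
    then show ?thesis
      using sum_zero_if_constant_row Sign_constant_row_if_ratios_differ by blast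
  next
    case (equal_ratios r)
    consider "\<rho> r * \<rho> r \<noteq> 1" | "\<rho> r = 1" | "\<rho> r = -1"
      by (metis mult_cancel_left1 mult_minus1 square_eq_1_iff)
    then show ?thesis
    proof cases
      case 1
      then have "\<forall>l\<in>A. M r l = sgn (\<rho> r * \<rho> r - 1)"
        using sign[OF equal_ratios(1)] equal_ratios(2) by (auto simp: sgn_if Sign_def)
      moreover have "sgn (\<rho> r * \<rho> r - 1) \<in> {1, -1}"
        using 1 by (simp add: sgn_if)
      ultimately show ?thesis
        using sum_zero_if_constant_row equal_ratios(1) by blast
    qed (use equal_ratios(2) in auto)
  qed simp
qed

end

lemma sgn_mult_sub_le_abs: "sgn p * (p - q) \<le> \<bar>q - p\<bar>" for p q :: real
  by (cases p "0::real" rule: linorder_cases) auto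

lemma abs_sub_eq_sgn_mult: "\<bar>q\<bar> \<le> \<bar>p\<bar> \<Longrightarrow> \<bar>q - p\<bar> = sgn p * (p - q)" for p q :: real
  by (cases p "0::real" rule: linorder_cases) (auto simp: abs_le_iff)

lemma abs_mult_sgn_mult_eq:
  fixes a b c d :: real
  shows "\<bar>a\<bar> * \<bar>b\<bar> - (sgn a * c) * (sgn b * d) = sgn (a * b) * (a * b - c * d)"
  by (simp add: abs_sgn[of a] abs_sgn[of b] sgn_mult algebra_simps)

lemma abs_mult_sub_ge:
  fixes a b c d :: real
  shows "\<bar>a\<bar> * \<bar>b\<bar> - (sgn a * c) * (sgn b * d) \<le> \<bar>c * d - a * b\<bar>"
  unfolding abs_mult_sgn_mult_eq by (rule sgn_mult_sub_le_abs)

lemma abs_mult_sub_eq: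
  fixes a b c d :: real
  assumes "\<bar>c\<bar> \<le> \<bar>a\<bar>" "\<bar>d\<bar> \<le> \<bar>b\<bar>"
  shows "\<bar>c * d - a * b\<bar> = \<bar>a\<bar> * \<bar>b\<bar> - (sgn a * c) * (sgn b * d)"
  unfolding abs_mult_sgn_mult_eq
  by (rule abs_sub_eq_sgn_mult) (use assms in \<open>simp add: abs_mult mult_mono\<close>)

lemma abs_le_if_abs_sq_sub_le:
  fixes a c :: real
  assumes "\<bar>c * c - a * a\<bar> \<le> \<bar>a\<bar> * \<bar>a\<bar> - (sgn a * c) * (sgn a * c)"
  shows "\<bar>c\<bar> \<le> \<bar>a\<bar>"
proof (cases "a = 0")
  case False
  then have "c * c \<le> a * a"
    using assms by (simp add: sgn_if abs_mult_self_eq split: if_splits)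
  then show ?thesis
    by (simp add: abs_le_square_iff power2_eq_square)
qed (use assms in \<open>auto simp: mult_le_0_iff\<close>)

lemma abs_segment_le:
  fixes a b c t :: real
  assumes "\<bar>a\<bar> \<le> c" "\<bar>b\<bar> \<le> c" "0 \<le> t" "t \<le> 1"
  shows "\<bar>a + t * (b - a)\<bar> \<le> c"
proof -
  have "\<bar>a + t * (b - a)\<bar> = \<bar>(1 - t) * a + t * b\<bar>"
    by (simp add: algebra_simps)
  also have "\<dots> \<le> \<bar>(1 - t) * a\<bar> + \<bar>t * b\<bar>"
    by (rule abs_triangle_ineq)
  also have "\<dots> = (1 - t) * \<bar>a\<bar> + t * \<bar>b\<bar>"
    using assms(3,4) by (simp add: abs_mult)
  also have "\<dots> \<le> c"
    using assms by (intro convex_bound_le) auto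
  finally show ?thesis .
qed

lemma vl1_pos:
  assumes "s \<noteq> 0"
  shows "0 < vl1 s"
proof -
  obtain i where "s $ i \<noteq> 0"
    using assms by (auto simp: vec_eq_iff)
  then show ?thesis
    unfolding vl1_def by (intro sum_pos2[of UNIV i]) auto
qed

definition sgn_vec :: "real^'n \<Rightarrow> real^'n" where
  "sgn_vec s = (\<chi> i. sgn (s $ i))"

lemma inner_sgn_vec: "sgn_vec s \<bullet> v = (\<Sum>i\<in>UNIV. sgn (s $ i) * v $ i)"
  by (simp add: sgn_vec_def inner_vec_def)

lemma inner_sgn_vec_self: "sgn_vec s \<bullet> s = vl1 s"
  unfolding inner_sgn_vec vl1_def by (intro sum.cong) (simp_all add: sgn_if)

lemma fobj_double: "2 * fobj s v = (\<Sum>i\<in>UNIV. \<Sum>j\<in>UNIV. \<bar>v $ i * v $ j - s $ i * s $ j\<bar>)"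
  by (simp add: fobj_def ml1_def outer_def)

lemma vl1_sq_sub_inner_sgn_vec_sq:
  "(vl1 s)\<^sup>2 - (sgn_vec s \<bullet> v)\<^sup>2
    = (\<Sum>i\<in>UNIV. \<Sum>j\<in>UNIV. \<bar>s $ i\<bar> * \<bar>s $ j\<bar> - (sgn (s $ i) * v $ i) * (sgn (s $ j) * v $ j))"
  by (simp add: vl1_def inner_sgn_vec power2_eq_square sum_product sum_subtractf)

lemma fobj_lower_bound: "(vl1 s)\<^sup>2 - (sgn_vec s \<bullet> v)\<^sup>2 \<le> 2 * fobj s v"
  unfolding vl1_sq_sub_inner_sgn_vec_sq fobj_double by (intro sum_mono abs_mult_sub_ge)

lemma fobj_eq_on_box:
  assumes "\<And>i. \<bar>v $ i\<bar> \<le> \<bar>s $ i\<bar>"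
  shows "2 * fobj s v = (vl1 s)\<^sup>2 - (sgn_vec s \<bullet> v)\<^sup>2"
  unfolding vl1_sq_sub_inner_sgn_vec_sq fobj_double by (intro sum.cong refl abs_mult_sub_eq assms)

lemma abs_le_if_fobj_attains_lower_bound:
  assumes "2 * fobj s v \<le> (vl1 s)\<^sup>2 - (sgn_vec s \<bullet> v)\<^sup>2"
  shows "\<bar>v $ i\<bar> \<le> \<bar>s $ i\<bar>"
proof -
  define gap where "gap i j = \<bar>v $ i * v $ j - s $ i * s $ j\<bar>
      - (\<bar>s $ i\<bar> * \<bar>s $ j\<bar> - (sgn (s $ i) * v $ i) * (sgn (s $ j) * v $ j))" for i j
  have gap_nonneg: "0 \<le> gap i j" for i j
    using abs_mult_sub_ge[of "s $ i" "s $ j" "v $ i" "v $ j"] by (simp add: gap_def)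
  have "(\<Sum>i\<in>UNIV. \<Sum>j\<in>UNIV. gap i j) = 2 * fobj s v - ((vl1 s)\<^sup>2 - (sgn_vec s \<bullet> v)\<^sup>2)"
    unfolding vl1_sq_sub_inner_sgn_vec_sq fobj_double gap_def by (simp add: sum_subtractf)
  also have "\<dots> \<le> 0"
    using assms by simp
  finally have "(\<Sum>i\<in>UNIV. \<Sum>j\<in>UNIV. gap i j) = 0"
    using gap_nonneg by (simp add: antisym sum_nonneg)
  then have "gap i i = 0"
    using gap_nonneg by (simp add: sum_nonneg sum_nonneg_eq_0_iff)
  then show ?thesis
    using abs_le_if_abs_sq_sub_le[of "v $ i" "s $ i"] by (simp add: gap_def)
qed

lemma stationary_certificate:
  fixes s u :: "real^'n"
  assumes "stationary s u"
  shows "\<exists>Z :: real^'n^'n. (\<forall>i j. Z $ i $ j = Z $ j $ i)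
    \<and> (\<forall>i j. Z $ i $ j \<in> Sign (u $ i * u $ j - s $ i * s $ j))
    \<and> (\<forall>i. (\<Sum>j\<in>UNIV. Z $ i $ j * u $ j) = 0)"
proof -
  obtain Z :: "real^'n^'n" where Z: "transpose Z = Z"
      "\<forall>i j. Z $ i $ j \<in> Sign ((outer u u - outer s s) $ i $ j)" "Z *v u = 0"
    using assms unfolding stationary_def subdiff_def by auto
  have "Z $ i $ j = Z $ j $ i" for i j
    using arg_cong[OF Z(1), of "\<lambda>A. A $ i $ j"] by (simp add: transpose_def)
  moreover have "Z $ i $ j \<in> Sign (u $ i * u $ j - s $ i * s $ j)" for i j
    using Z(2) by (simp add: outer_def)
  moreover have "(\<Sum>j\<in>UNIV. Z $ i $ j * u $ j) = 0" for i
    using arg_cong[OF Z(3), of "\<lambda>v. v $ i"] by (simp add: matrix_vector_mult_def)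
  ultimately show ?thesis
    by blast
qed

lemma stationary_support:
  assumes "stationary s u" and "s $ i = 0"
  shows "u $ i = 0"
proof -
  obtain Z where sign: "\<And>i j. Z $ i $ j \<in> Sign (u $ i * u $ j - s $ i * s $ j)"
    and rows: "\<And>i. (\<Sum>j\<in>UNIV. Z $ i $ j * u $ j) = 0"
    using stationary_certificate[OF assms(1)] by blast
  have "\<bar>u $ i * u $ j - s $ i * s $ j\<bar> = u $ i * (Z $ i $ j * u $ j)" for j
    using Sign_mult_self[OF sign[of i j]] assms(2) by (simp add: algebra_simps)
  then have "(\<Sum>j\<in>UNIV. \<bar>u $ i * u $ j - s $ i * s $ j\<bar>) = u $ i * (\<Sum>j\<in>UNIV. Z $ i $ j * u $ j)"
    by (simp add: sum_distrib_left)
  also have "\<dots> = 0"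
    using rows by simp
  finally have "\<bar>u $ i * u $ i - s $ i * s $ i\<bar> = 0"
    by (simp add: sum_nonneg_eq_0_iff)
  then show ?thesis
    using assms(2) by simp
qed

lemma stationary_trichotomy:
  fixes s u :: "real^'n"
  assumes "stationary s u"
  shows "sgn_vec s \<bullet> u = 0 \<or> u = s \<or> u = - s"
proof -
  obtain Z where sym: "\<And>i j. Z $ i $ j = Z $ j $ i"
    and sign: "\<And>i j. Z $ i $ j \<in> Sign (u $ i * u $ j - s $ i * s $ j)"
    and rows: "\<And>i. (\<Sum>j\<in>UNIV. Z $ i $ j * u $ j) = 0"
    using stationary_certificate[OF assms] by blast
  define A where "A = {i. s $ i \<noteq> 0}"
  define \<rho> where "\<rho> i = u $ i / s $ i" for i
  define M where "M i j = sgn (s $ i) * sgn (s $ j) * Z $ i $ j" for i j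
  have off_A: "u $ i = 0" "s $ i = 0" if "i \<notin> A" for i
    using that stationary_support[OF assms] by (auto simp: A_def)
  have u_eq: "u $ i = \<rho> i * s $ i" and \<rho>_abs: "\<rho> i * \<bar>s $ i\<bar> = sgn (s $ i) * u $ i"
    if "i \<in> A" for i
    using that by (auto simp: A_def \<rho>_def abs_sgn[of "s $ i"])
  have sum_A: "(\<Sum>j\<in>A. f j * u $ j) = (\<Sum>j\<in>UNIV. f j * u $ j)" for f :: "'n \<Rightarrow> real"
    by (intro sum.mono_neutral_left) (auto simp: off_A)
  have "(\<Sum>l\<in>A. \<rho> l * \<bar>s $ l\<bar>) = 0 \<or> (\<forall>l\<in>A. \<rho> l = 1) \<or> (\<forall>l\<in>A. \<rho> l = -1)"
  proof (rule Sign_ratio_trichotomy)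
    show "finite A" by simp
    show "0 < \<bar>s $ l\<bar>" if "l \<in> A" for l
      using that by (simp add: A_def)
    show "M k l = M l k" for k l
      using sym by (simp add: M_def)
    show "M k l \<in> Sign (\<rho> k * \<rho> l - 1)" if "k \<in> A" "l \<in> A" for k l
      using Sign_ratio[OF _ _ sign[of k l]] that by (simp add: A_def M_def \<rho>_def)
    show "(\<Sum>l\<in>A. M k l * (\<rho> l * \<bar>s $ l\<bar>)) = 0" for k
    proof -
      have "(\<Sum>l\<in>A. M k l * (\<rho> l * \<bar>s $ l\<bar>)) = (\<Sum>l\<in>A. (sgn (s $ k) * Z $ k $ l) * u $ l)"
        by (intro sum.cong refl) (auto simp: M_def \<rho>_abs A_def sgn_if)
      also have "\<dots> = (\<Sum>l\<in>UNIV. (sgn (s $ k) * Z $ k $ l) * u $ l)"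
        by (rule sum_A)
      also have "\<dots> = sgn (s $ k) * (\<Sum>l\<in>UNIV. Z $ k $ l * u $ l)"
        by (simp add: sum_distrib_left mult.assoc)
      finally show ?thesis
        using rows by simp
    qed
  qed
  moreover have "(\<Sum>l\<in>A. \<rho> l * \<bar>s $ l\<bar>) = sgn_vec s \<bullet> u"
    unfolding inner_sgn_vec by (simp add: \<rho>_abs sum_A)
  moreover have scaled: "u = c *\<^sub>R s" if "\<forall>l\<in>A. \<rho> l = c" for c
    unfolding vec_eq_iff
  proof
    show "u $ i = (c *\<^sub>R s) $ i" for i
      by (cases "i \<in> A") (simp_all add: u_eq off_A that)
  qed
  ultimately show ?thesis
    using scaled[of 1] scaled[of "-1"] by auto
qed

lemma stationary_abs_le:
  fixes s u :: "real^'n"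
  assumes "stationary s u" and "sgn_vec s \<bullet> u = 0"
  shows "\<bar>u $ i\<bar> \<le> \<bar>s $ i\<bar>"
proof (rule abs_le_if_fobj_attains_lower_bound)
  obtain Z where sign: "\<And>i j. Z $ i $ j \<in> Sign (u $ i * u $ j - s $ i * s $ j)"
    and rows: "\<And>i. (\<Sum>j\<in>UNIV. Z $ i $ j * u $ j) = 0"
    using stationary_certificate[OF assms(1)] by blast
  have "2 * fobj s u = (\<Sum>i\<in>UNIV. \<Sum>j\<in>UNIV. Z $ i $ j * (u $ i * u $ j - s $ i * s $ j))"
    unfolding fobj_double using Sign_mult_self[OF sign] by simp
  also have "\<dots> = (\<Sum>i\<in>UNIV. u $ i * (\<Sum>j\<in>UNIV. Z $ i $ j * u $ j))
      - (\<Sum>i\<in>UNIV. \<Sum>j\<in>UNIV. Z $ i $ j * (s $ i * s $ j))"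
    by (simp add: sum_distrib_left sum_subtractf algebra_simps)
  also have "\<dots> \<le> (\<Sum>i\<in>UNIV. \<Sum>j\<in>UNIV. \<bar>s $ i\<bar> * \<bar>s $ j\<bar>)"
  proof -
    have "- (Z $ i $ j * (s $ i * s $ j)) \<le> \<bar>s $ i\<bar> * \<bar>s $ j\<bar>" for i j
    proof -
      have "\<bar>Z $ i $ j * (s $ i * s $ j)\<bar> \<le> \<bar>s $ i\<bar> * \<bar>s $ j\<bar>"
        unfolding abs_mult using Sign_abs_le[OF sign[of i j]] by (simp add: mult_left_le_one_le)
      then show ?thesis
        by linarith
    qed
    then show ?thesis
      using rows by (simp add: sum_negf[symmetric] sum_mono)
  qed
  also have "\<dots> = (vl1 s)\<^sup>2 - (sgn_vec s \<bullet> u)\<^sup>2"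
    by (simp add: assms(2) vl1_def power2_eq_square sum_product)
  finally show "2 * fobj s u \<le> (vl1 s)\<^sup>2 - (sgn_vec s \<bullet> u)\<^sup>2" .
qed

lemma Liminf_le_Liminf_compose:
  assumes "filterlim h G F"
  shows "Liminf G g \<le> Liminf F (\<lambda>x. g (h x))"
proof -
  have "Liminf G g \<le> Liminf (filtermap h F) g"
    unfolding Liminf_def
    by (rule SUP_subset_mono) (use assms in \<open>auto simp: filterlim_def filter_leD\<close>)
  also have "\<dots> \<le> Liminf F (\<lambda>x. g (h x))"
    by (rule Liminf_filtermap_le)
  finally show ?thesis .
qed

lemma Liminf_at_right_nhds_eqI:
  fixes q :: "real \<Rightarrow> 'a::t2_space \<Rightarrow> real" and g :: "'a \<Rightarrow> real"
  assumes lower: "\<And>t v. 0 < t \<Longrightarrow> g v \<le> q t v"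
    and cont: "isCont g w"
    and attained: "\<forall>\<^sub>F t in at_right 0. q t w = g w"
  shows "Liminf (at_right 0 \<times>\<^sub>F nhds w) (\<lambda>(t, v). ereal (q t v)) = ereal (g w)"
proof (rule antisym)
  have "filterlim (\<lambda>t. (t, w)) (at_right 0 \<times>\<^sub>F nhds w) (at_right (0::real))"
    by (intro filterlim_Pair filterlim_ident tendsto_const)
  from Liminf_le_Liminf_compose[OF this, where g = "\<lambda>(t, v). ereal (q t v)"]
  have "Liminf (at_right 0 \<times>\<^sub>F nhds w) (\<lambda>(t, v). ereal (q t v))
      \<le> Liminf (at_right 0) (\<lambda>t. ereal (q t w))"
    by simp
  also have "\<dots> = Liminf (at_right 0) (\<lambda>_ :: real. ereal (g w))"
    by (rule Liminf_eq) (use attained in \<open>eventually_elim, simp\<close>)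
  also have "\<dots> = ereal (g w)"
    by (simp add: Liminf_const)
  finally show "Liminf (at_right 0 \<times>\<^sub>F nhds w) (\<lambda>(t, v). ereal (q t v)) \<le> ereal (g w)" .
next
  have nontrivial: "at_right (0::real) \<times>\<^sub>F nhds w \<noteq> bot"
    by (simp add: prod_filter_eq_bot)
  have "((\<lambda>p. ereal (g (snd p))) \<longlongrightarrow> ereal (g w)) (at_right (0::real) \<times>\<^sub>F nhds w)"
    by (intro tendsto_ereal isCont_tendsto_compose[OF cont] filterlim_snd)
  from lim_imp_Liminf[OF nontrivial this]
  have "ereal (g w) = Liminf (at_right (0::real) \<times>\<^sub>F nhds w) (\<lambda>p. ereal (g (snd p)))"
    by simp
  also have "\<dots> \<le> Liminf (at_right 0 \<times>\<^sub>F nhds w) (\<lambda>(t, v). ereal (q t v))"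
  proof (rule Liminf_mono)
    have "\<forall>\<^sub>F (t, v) in at_right 0 \<times>\<^sub>F nhds w. (0::real) < t"
      by (simp add: eventually_prod1 eventually_at_right_less)
    then show "\<forall>\<^sub>F p in at_right 0 \<times>\<^sub>F nhds w. ereal (g (snd p)) \<le> (case p of (t, v) \<Rightarrow> ereal (q t v))"
      by eventually_elim (use lower in auto)
  qed
  finally show "ereal (g w) \<le> Liminf (at_right 0 \<times>\<^sub>F nhds w) (\<lambda>(t, v). ereal (q t v))" .
qed

lemma second_subderiv_fobj:
  fixes s u w :: "real^'n"
  assumes orth: "sgn_vec s \<bullet> u = 0" and box: "\<And>i. \<bar>u $ i\<bar> \<le> \<bar>s $ i\<bar>"
    and w: "w = s - u \<or> w = - s - u"
  shows "second_subderiv (fobj s) u 0 w = ereal (- (vl1 s)\<^sup>2)"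
proof -
  define q where "q t v = (fobj s (u + t *\<^sub>R v) - fobj s u - t * (0 \<bullet> v)) / (t\<^sup>2 / 2)" for t v
  have q_eq: "q t v = (2 * fobj s (u + t *\<^sub>R v) - (vl1 s)\<^sup>2) / t\<^sup>2" for t v
    using fobj_eq_on_box[OF box] orth by (simp add: q_def field_simps)
  have inner_shift: "sgn_vec s \<bullet> (u + t *\<^sub>R v) = t * (sgn_vec s \<bullet> v)" for t v
    by (simp add: inner_add_right orth)
  have lower: "- (sgn_vec s \<bullet> v)\<^sup>2 \<le> q t v" if "0 < t" for t v
  proof -
    have "(vl1 s)\<^sup>2 - t\<^sup>2 * (sgn_vec s \<bullet> v)\<^sup>2 \<le> 2 * fobj s (u + t *\<^sub>R v)"
      using fobj_lower_bound[of s "u + t *\<^sub>R v"] by (simp add: inner_shift power_mult_distrib)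
    then have "- (sgn_vec s \<bullet> v)\<^sup>2 * t\<^sup>2 \<le> 2 * fobj s (u + t *\<^sub>R v) - (vl1 s)\<^sup>2"
      by (simp add: algebra_simps)
    then show ?thesis
      using that by (simp add: q_eq pos_le_divide_eq)
  qed
  have "sgn_vec s \<bullet> w = vl1 s \<or> sgn_vec s \<bullet> w = - vl1 s"
    using w by (auto simp: inner_diff_right inner_sgn_vec_self orth)
  then have w_sq: "(sgn_vec s \<bullet> w)\<^sup>2 = (vl1 s)\<^sup>2"
    by auto
  have on_segment: "q t w = - (sgn_vec s \<bullet> w)\<^sup>2" if "0 < t" "t \<le> 1" for t
  proof -
    have "\<bar>(u + t *\<^sub>R w) $ i\<bar> \<le> \<bar>s $ i\<bar>" for i
      using w abs_segment_le[OF box[of i], of "s $ i" t] abs_segment_le[OF box[of i], of "- s $ i" t] that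
      by auto
    from fobj_eq_on_box[OF this] show ?thesis
      using that by (simp add: q_eq inner_shift w_sq power_mult_distrib)
  qed
  have "Liminf (at_right 0 \<times>\<^sub>F nhds w) (\<lambda>(t, v). ereal (q t v)) = ereal (- (sgn_vec s \<bullet> w)\<^sup>2)"
  proof (rule Liminf_at_right_nhds_eqI)
    show "isCont (\<lambda>v. - (sgn_vec s \<bullet> v)\<^sup>2) w"
      by (intro continuous_intros)
    show "\<forall>\<^sub>F t in at_right 0. q t w = - (sgn_vec s \<bullet> w)\<^sup>2"
      unfolding eventually_at_right_field by (intro exI[of _ 1]) (auto intro: on_segment)
  qed (rule lower)
  then show ?thesis
    by (simp add: second_subderiv_def q_def w_sq)
qed

theorem theorem2:
  fixes ustar u w :: "real^'n"
  assumes "ustar \<noteq> 0"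
    and "spurious_stationary ustar u"
    and "w = ustar - u \<or> w = - ustar - u"
  shows "second_subderiv (fobj ustar) u 0 w = ereal (- ((vl1 ustar)^2))
         \<and> - ((vl1 ustar)^2) < (0::real)"
proof -
  have stationary: "stationary ustar u" and "u \<noteq> ustar" "u \<noteq> - ustar"
    using assms(2) by (simp_all add: spurious_stationary_def)
  then have orth: "sgn_vec ustar \<bullet> u = 0"
    using stationary_trichotomy by blast
  have box: "\<bar>u $ i\<bar> \<le> \<bar>ustar $ i\<bar>" for i
    using stationary_abs_le[OF stationary orth] .
  show ?thesis
    using second_subderiv_fobj[OF orth box assms(3)] vl1_pos[OF assms(1)] by simp
qed

end
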